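(* Let $p\ge 1/2$ be fixed and let $\epsilon>0$ be an arbitrarily small constant. In the Majority Model (MM) on the cycle $C_n$ started from a $p$-random initial coloring, with probability $1-o(1)$ as $n\to\infty$ the process reaches, within $\mathcal{O}(\log n)$ rounds, a stable coloring whose number of blue nodes is between $(1-\epsilon)\frac{2p^2-p^3}{1-p+p^2}n$ and $(1+\epsilon)\frac{2p^2-p^3}{1-p+p^2}n$.
   Context: A coloring is a map from the nodes to $\{b,w\}$. In MM, all nodes update simultaneously: a node adopts the color strictly more frequent among its neighbors in the previous round and keeps its color in case of a tie. A coloring is stable if one application of the update rule returns it unchanged. A $p$-random coloring colors each node blue independently with probability $p$ and white otherwise. *)

theory Defs
  imports "HOL-Probability.Probability"
begin

text \<open>Colorings of the cycle C_n with nodes 0..n-1: True = blue (b), False = white (w).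
  Values outside {0..<n} are irrelevant and left unchanged by the dynamics.\<close>

definition cycle_nbrs :: "nat \<Rightarrow> nat \<Rightarrow> nat set" where
  "cycle_nbrs n i = {(i + 1) mod n, (i + n - 1) mod n}"

definition mm_step :: "nat \<Rightarrow> (nat \<Rightarrow> bool) \<Rightarrow> (nat \<Rightarrow> bool)" where
  "mm_step n c i =
     (if i < n then
        (let nb = card {j \<in> cycle_nbrs n i. c j};
             nw = card {j \<in> cycle_nbrs n i. \<not> c j}
         in if nb > nw then True else if nw > nb then False else c i)
      else c i)"

definition mm_stable :: "nat \<Rightarrow> (nat \<Rightarrow> bool) \<Rightarrow> bool" where
  "mm_stable n c \<longleftrightarrow> (\<forall>i<n. mm_step n c i = c i)"

definition num_blue :: "nat \<Rightarrow> (nat \<Rightarrow> bool) \<Rightarrow> nat" where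
  "num_blue n c = card {i. i < n \<and> c i}"

definition random_coloring :: "real \<Rightarrow> nat \<Rightarrow> (nat \<Rightarrow> bool) pmf" where
  "random_coloring p n = Pi_pmf {..<n} False (\<lambda>_. bernoulli_pmf p)"

end

theory Submission
  imports Defs "HOL-Real_Asymp.Real_Asymp"
begin

(*
  Lift the cycle to the integers. A node with two neighbours changes colour exactly when both
  neighbours disagree with it, and by induction a node z changes colour in round t+1 iff the
  initial coloring alternates on the window [z-t-1, z+t+1]; it then takes the colour of the two
  ends of that window. Hence after T rounds the coloring is stable unless some window of radius
  T+1 alternates, which happens at a given node with probability (p(1-p))^(T+1) <= 4^-(T+1),
  negligible for T ~ 2 ln n. The same description shows that a node is blue after t rounds with
  probability p + (2p-1) * sum_{k=1..t} (p(1-p))^k, which tends to (2p^2-p^3)/(1-p+p^2), and that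
  this event only depends on the 2t+1 nodes around the node. So the number of blue nodes has
  variance O(n t), and Chebyshev's inequality gives concentration.
*)

section \<open>Majority dynamics on the integer line\<close>

definition mm_step_int :: "(int \<Rightarrow> bool) \<Rightarrow> int \<Rightarrow> bool" where
  "mm_step_int x z = (if x (z - 1) = x (z + 1) then x (z + 1) else x z)"

definition alternating :: "(int \<Rightarrow> bool) \<Rightarrow> int \<Rightarrow> nat \<Rightarrow> bool" where
  "alternating x z l \<longleftrightarrow> (\<forall>w. z - int l \<le> w \<and> w < z + int l \<longrightarrow> x (w + 1) \<noteq> x w)"

lemma alternating_0 [simp]: "alternating x z 0"
  by (auto simp: alternating_def)

lemma alternating_mono: "alternating x z l \<Longrightarrow> k \<le> l \<Longrightarrow> alternating x z k"
  by (auto simp: alternating_def)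

lemma alternating_Suc:
  "alternating x z (Suc l) \<longleftrightarrow>
     alternating x z l \<and> x (z - int l) \<noteq> x (z - int l - 1) \<and> x (z + int l + 1) \<noteq> x (z + int l)"
proof -
  have window: "z - int (Suc l) \<le> w \<and> w < z + int (Suc l) \<longleftrightarrow>
      (z - int l \<le> w \<and> w < z + int l) \<or> w = z - int l - 1 \<or> w = z + int l" for w
    by auto
  show ?thesis
    unfolding alternating_def window by (auto simp del: of_nat_Suc)
qed

lemma alternating_edge:
  "alternating x z l \<Longrightarrow> z - int l \<le> w \<Longrightarrow> w < z + int l \<Longrightarrow> x (w + 1) \<noteq> x w"
  by (simp add: alternating_def)

lemma alternating_1: "alternating x z 1 \<longleftrightarrow> x (z - 1) \<noteq> x z \<and> x (z + 1) \<noteq> x z"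
  using alternating_Suc[of x z 0] by auto

lemma mm_step_int_neq_iff: "mm_step_int x z \<noteq> x z \<longleftrightarrow> alternating x z 1"
  unfolding mm_step_int_def alternating_1 by auto

lemma alternating_Suc_flips:
  assumes "alternating x z (Suc l)" and "\<bar>w - z\<bar> \<le> int l"
  shows "mm_step_int x w = (\<not> x w)"
proof -
  have "x (w + 1) \<noteq> x w"
    by (rule alternating_edge[OF assms(1)]) (use assms(2) in auto)
  moreover have "x (w - 1 + 1) \<noteq> x (w - 1)"
    by (rule alternating_edge[OF assms(1)]) (use assms(2) in auto)
  ultimately show ?thesis
    by (auto simp: mm_step_int_def)
qed

lemma not_alternating_mm_step_int:
  assumes "\<not> alternating x z 1"
  shows "\<not> alternating (mm_step_int x) z 1"
proof -
  from assms have "x (z - 1) = x z \<or> x (z + 1) = x z"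
    unfolding alternating_1 by blast
  then show ?thesis
    unfolding alternating_1 mm_step_int_def by auto
qed

lemma alternating_mm_step_int_iff:
  assumes "alternating x z 1"
  shows "alternating (mm_step_int x) z l \<longleftrightarrow> alternating x z (Suc l)"
proof
  assume alt: "alternating x z (Suc l)"
  show "alternating (mm_step_int x) z l"
    unfolding alternating_def
  proof (intro allI impI)
    fix w
    assume w: "z - int l \<le> w \<and> w < z + int l"
    have "mm_step_int x w = (\<not> x w)" "mm_step_int x (w + 1) = (\<not> x (w + 1))"
      by (rule alternating_Suc_flips[OF alt]; use w in auto)+
    moreover have "x (w + 1) \<noteq> x w"
      by (rule alternating_edge[OF alt]) (use w in auto)
    ultimately show "mm_step_int x (w + 1) \<noteq> mm_step_int x w"
      by simp
  qed
next
  show "alternating (mm_step_int x) z l \<Longrightarrow> alternating x z (Suc l)"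
  proof (induction l)
    case 0
    then show ?case using assms by simp
  next
    case (Suc l)
    then have alt: "alternating x z (Suc l)"
      using alternating_mono le_SucI by blast
    \<comment> \<open>The nodes at distance \<open>l + 1\<close> from \<open>z\<close> flip, so their outer neighbours disagree with them.\<close>
    have "mm_step_int x (z - int l - 1) \<noteq> x (z - int l - 1)"
      using alternating_Suc_flips[OF alt, of "z - int l"] Suc.prems alt
      by (simp add: alternating_Suc)
    moreover have "mm_step_int x (z + int l + 1) \<noteq> x (z + int l + 1)"
      using alternating_Suc_flips[OF alt, of "z + int l"] Suc.prems alt
      by (simp add: alternating_Suc)
    ultimately show ?case
      using alt unfolding mm_step_int_neq_iff alternating_Suc[of x z "Suc l"] alternating_1
      by (simp add: algebra_simps)
  qed
qed

lemma alternating_iterate_1_iff: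
  "alternating ((mm_step_int ^^ t) x) z 1 \<longleftrightarrow> alternating x z (Suc t)"
proof (induction t arbitrary: x)
  case 0
  then show ?case by simp
next
  case (Suc t)
  have "alternating ((mm_step_int ^^ Suc t) x) z 1 \<longleftrightarrow> alternating (mm_step_int x) z (Suc t)"
    using Suc.IH by (simp only: funpow_Suc_right o_apply)
  also have "\<dots> \<longleftrightarrow> alternating x z (Suc (Suc t))"
  proof (cases "alternating x z 1")
    case True
    then show ?thesis by (rule alternating_mm_step_int_iff)
  next
    case False
    then show ?thesis
      using not_alternating_mm_step_int alternating_mono[of _ z _ 1] by auto
  qed
  finally show ?case .
qed

lemma mm_step_int_iterate_before_flip:
  "alternating x z (Suc t) \<Longrightarrow> (mm_step_int ^^ t) x z = (\<not> x (z + int (Suc t)))"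
proof (induction t)
  case 0
  then show ?case by (simp add: alternating_Suc)
next
  case (Suc t)
  have "alternating x z (Suc t)"
    using Suc.prems alternating_mono le_SucI by blast
  then have "(mm_step_int ^^ t) x z = (\<not> x (z + int (Suc t)))"
    and "mm_step_int ((mm_step_int ^^ t) x) z \<noteq> (mm_step_int ^^ t) x z"
    using Suc.IH alternating_iterate_1_iff mm_step_int_neq_iff by blast+
  then show ?case
    using Suc.prems by (auto simp: alternating_Suc[of x z "Suc t"] algebra_simps)
qed

lemma mm_step_int_iterate_Suc:
  "(mm_step_int ^^ Suc t) x z =
     (if alternating x z (Suc t) then x (z + int (Suc t)) else (mm_step_int ^^ t) x z)"
  using mm_step_int_iterate_before_flip[of x z t]
    mm_step_int_neq_iff[of "(mm_step_int ^^ t) x" z] alternating_iterate_1_iff[of t x z]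
  by auto

lemma mm_step_int_iterate_local:
  "(\<forall>w. \<bar>w - z\<bar> \<le> int t \<longrightarrow> x w = y w) \<Longrightarrow> (mm_step_int ^^ t) x z = (mm_step_int ^^ t) y z"
proof (induction t arbitrary: z)
  case 0
  then show ?case by simp
next
  case (Suc t)
  have "(mm_step_int ^^ t) x (z + d) = (mm_step_int ^^ t) y (z + d)" if "\<bar>d\<bar> \<le> 1" for d
    by (rule Suc.IH) (use Suc.prems that in auto)
  from this[of "-1"] this[of 0] this[of 1]
  have "mm_step_int ((mm_step_int ^^ t) x) z = mm_step_int ((mm_step_int ^^ t) y) z"
    unfolding mm_step_int_def[of "(mm_step_int ^^ t) x"] mm_step_int_def[of "(mm_step_int ^^ t) y"]
    by simp
  then show ?case
    by simp
qed

lemma alternating_parity: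
  assumes "alternating x z l" and "k \<le> 2 * l"
  shows "x (z - int l + int k) = (x (z - int l) \<noteq> odd k)"
  using assms(2)
proof (induction k)
  case 0
  then show ?case by simp
next
  case (Suc k)
  have "x (z - int l + int k + 1) \<noteq> x (z - int l + int k)"
    by (rule alternating_edge[OF assms(1)]) (use Suc.prems in simp_all)
  then show ?case
    using Suc by (simp add: ac_simps)
qed

lemma alternating_with_end_iff:
  "alternating x z l \<and> x (z + int l) = e \<longleftrightarrow> (\<forall>k\<le>2*l. x (z - int l + int k) = (e \<noteq> odd k))"
proof
  assume alt_end: "alternating x z l \<and> x (z + int l) = e"
  have "x (z - int l + int (2 * l)) = x (z - int l)"
    using alternating_parity[of x z l "2 * l"] alt_end by simp
  moreover have "z - int l + int (2 * l) = z + int l"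
    by simp
  ultimately have "x (z + int l) = x (z - int l)"
    by metis
  then show "\<forall>k\<le>2*l. x (z - int l + int k) = (e \<noteq> odd k)"
    using alternating_parity[of x z l] alt_end by auto
next
  assume pattern: "\<forall>k\<le>2*l. x (z - int l + int k) = (e \<noteq> odd k)"
  have "x (w + 1) \<noteq> x w" if "z - int l \<le> w" "w < z + int l" for w
  proof -
    define k where "k = nat (w - (z - int l))"
    have "w = z - int l + int k" "k < 2 * l"
      using that unfolding k_def by linarith+
    then show ?thesis
      using pattern[rule_format, of k] pattern[rule_format, of "Suc k"] by (simp add: ac_simps)
  qed
  moreover have "x (z + int l) = e"
    using pattern[rule_format, of "2 * l"] by (simp add: ac_simps)
  ultimately show "alternating x z l \<and> x (z + int l) = e"
    unfolding alternating_def by blast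
qed

section \<open>From the cycle to the integer line\<close>

definition cycle_node :: "nat \<Rightarrow> int \<Rightarrow> nat" where
  "cycle_node n z = nat (z mod int n)"

definition cycle_lift :: "nat \<Rightarrow> (nat \<Rightarrow> bool) \<Rightarrow> int \<Rightarrow> bool" where
  "cycle_lift n c z = c (cycle_node n z)"

lemma cycle_node_less: "0 < n \<Longrightarrow> cycle_node n z < n"
  unfolding cycle_node_def by (simp add: nat_less_iff)

lemma cycle_node_of_nat [simp]: "i < n \<Longrightarrow> cycle_node n (int i) = i"
  unfolding cycle_node_def by (simp add: of_nat_mod[symmetric] del: of_nat_mod)

lemma of_nat_cycle_node: "0 < n \<Longrightarrow> int (cycle_node n z) = z mod int n"
  unfolding cycle_node_def by simp

lemma cycle_node_eq_iff: "0 < n \<Longrightarrow> cycle_node n a = cycle_node n b \<longleftrightarrow> a mod int n = b mod int n"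
  unfolding cycle_node_def by (simp add: eq_nat_nat_iff)

lemma inj_on_cycle_node:
  assumes "b - a < int n"
  shows "inj_on (cycle_node n) {a..b}"
proof (rule inj_onI)
  fix v w
  assume v: "v \<in> {a..b}" and w: "w \<in> {a..b}" and eq: "cycle_node n v = cycle_node n w"
  then have "0 < n"
    using assms by auto
  with eq have "int n dvd v - w"
    by (simp add: cycle_node_eq_iff mod_eq_dvd_iff)
  moreover have "\<bar>v - w\<bar> < int n"
    using v w assms by auto
  ultimately show "v = w"
    using dvd_imp_le_int[of "v - w" "int n"] by fastforce
qed

lemma cycle_nbrs_cycle_node:
  assumes "0 < n"
  shows "cycle_nbrs n (cycle_node n z) = {cycle_node n (z + 1), cycle_node n (z - 1)}"
proof -
  have "int ((cycle_node n z + 1) mod n) = (z + 1) mod int n"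
    using assms by (simp add: of_nat_cycle_node of_nat_mod) (metis add.commute mod_add_right_eq)
  moreover have "int ((cycle_node n z + n - 1) mod n) = (z - 1) mod int n"
  proof -
    have "int ((cycle_node n z + n - 1) mod n) = (z mod int n + int n - 1) mod int n"
      using assms by (simp add: of_nat_cycle_node of_nat_mod of_nat_diff)
    also have "\<dots> = (z - 1) mod int n"
      by (metis add.commute add_diff_eq mod_add_left_eq mod_add_self1)
    finally show ?thesis .
  qed
  ultimately show ?thesis
    using assms unfolding cycle_nbrs_def by (simp add: of_nat_cycle_node[symmetric])
qed

lemma card_doubleton_filter:
  assumes "u \<noteq> v"
  shows "card {j \<in> {u, v}. P j} = of_bool (P u) + of_bool (P v)"
proof -
  have "{j \<in> {u, v}. P j} = (if P u then {u} else {}) \<union> (if P v then {v} else {})"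
    by auto
  then show ?thesis
    using assms by simp
qed

lemma mm_step_cycle_lift:
  assumes "3 \<le> n"
  shows "cycle_lift n (mm_step n c) = mm_step_int (cycle_lift n c)"
proof
  fix z
  define u v where "u = cycle_node n (z + 1)" and "v = cycle_node n (z - 1)"
  have "inj_on (cycle_node n) {z - 1..z + 1}"
    using assms by (intro inj_on_cycle_node) simp
  then have "u \<noteq> v"
    unfolding u_def v_def by (auto dest: inj_onD)
  have nbrs: "cycle_nbrs n (cycle_node n z) = {u, v}"
    using assms cycle_nbrs_cycle_node unfolding u_def v_def by auto
  have "card {j \<in> cycle_nbrs n (cycle_node n z). c j} = of_bool (c u) + of_bool (c v)"
    unfolding nbrs by (rule card_doubleton_filter[OF \<open>u \<noteq> v\<close>])
  moreover have "card {j \<in> cycle_nbrs n (cycle_node n z). \<not> c j} = of_bool (\<not> c u) + of_bool (\<not> c v)"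
    unfolding nbrs by (rule card_doubleton_filter[OF \<open>u \<noteq> v\<close>])
  moreover have "cycle_node n z < n"
    using assms cycle_node_less by auto
  ultimately show "cycle_lift n (mm_step n c) z = mm_step_int (cycle_lift n c) z"
    unfolding cycle_lift_def mm_step_def mm_step_int_def Let_def u_def[symmetric] v_def[symmetric]
    by (cases "c u"; cases "c v") simp_all
qed

lemma mm_step_iterate_cycle_lift:
  "3 \<le> n \<Longrightarrow> cycle_lift n ((mm_step n ^^ t) c) = (mm_step_int ^^ t) (cycle_lift n c)"
  by (induction t) (simp_all add: mm_step_cycle_lift)

lemma mm_step_iterate_eq_mm_step_int:
  assumes "3 \<le> n" and "i < n"
  shows "(mm_step n ^^ t) c i = (mm_step_int ^^ t) (cycle_lift n c) (int i)"
proof -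
  have "cycle_lift n ((mm_step n ^^ t) c) (int i) = (mm_step_int ^^ t) (cycle_lift n c) (int i)"
    by (simp add: mm_step_iterate_cycle_lift assms(1))
  then show ?thesis
    using assms(2) by (simp add: cycle_lift_def)
qed

lemma mm_stable_iterate_if_not_alternating:
  assumes "3 \<le> n" and "\<forall>i<n. \<not> alternating (cycle_lift n c) (int i) (Suc t)"
  shows "mm_stable n ((mm_step n ^^ t) c)"
  unfolding mm_stable_def
proof (intro allI impI)
  fix i
  assume "i < n"
  then have "mm_step n ((mm_step n ^^ t) c) i = (mm_step_int ^^ Suc t) (cycle_lift n c) (int i)"
    using mm_step_iterate_eq_mm_step_int[OF assms(1), of i "Suc t"] by simp
  also have "\<dots> = (mm_step_int ^^ t) (cycle_lift n c) (int i)"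
    using assms(2) \<open>i < n\<close> mm_step_int_iterate_Suc[of t "cycle_lift n c" "int i"] by simp
  also have "\<dots> = (mm_step n ^^ t) c i"
    using mm_step_iterate_eq_mm_step_int[OF assms(1) \<open>i < n\<close>] by simp
  finally show "mm_step n ((mm_step n ^^ t) c) i = (mm_step n ^^ t) c i" .
qed

section \<open>Events of the random coloring\<close>

definition determined_by :: "('a \<Rightarrow> 'b) set \<Rightarrow> 'a set \<Rightarrow> bool" where
  "determined_by E W \<longleftrightarrow> (\<forall>c c'. (\<forall>j\<in>W. c j = c' j) \<longrightarrow> c \<in> E \<longrightarrow> c' \<in> E)"

lemma determined_byD:
  assumes "determined_by E W" and "\<forall>j\<in>W. c j = c' j"
  shows "c \<in> E \<longleftrightarrow> c' \<in> E"
proof -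
  have "\<forall>j\<in>W. c' j = c j"
    using assms(2) by simp
  then show ?thesis
    using assms unfolding determined_by_def by blast
qed

lemma measure_pmf_prob_pair_Times:
  "measure_pmf.prob (pair_pmf M N) (A \<times> B) = measure_pmf.prob M A * measure_pmf.prob N B"
proof -
  have "measure_pmf.prob (pair_pmf M N) (A \<times> B) =
      measure_pmf.prob (pair_pmf M N) ((A \<times> B) \<inter> set_pmf (pair_pmf M N))"
    by (rule measure_Int_set_pmf[symmetric])
  also have "(A \<times> B) \<inter> set_pmf (pair_pmf M N) = (A \<inter> set_pmf M) \<times> (B \<inter> set_pmf N)"
    by auto
  also have "measure_pmf.prob (pair_pmf M N) \<dots> =
      measure_pmf.prob M (A \<inter> set_pmf M) * measure_pmf.prob N (B \<inter> set_pmf N)"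
    by (rule measure_pmf_prob_product) (auto intro: countable_subset[OF _ countable_set_pmf])
  finally show ?thesis
    by (simp add: measure_Int_set_pmf)
qed

lemma prob_Pi_pmf_Int_determined_by:
  assumes "finite A" and "W1 \<subseteq> A" and "W1 \<inter> W2 = {}"
    and "determined_by E1 W1" and "determined_by E2 W2"
  shows "measure_pmf.prob (Pi_pmf A d P) (E1 \<inter> E2) =
         measure_pmf.prob (Pi_pmf A d P) E1 * measure_pmf.prob (Pi_pmf A d P) E2"
proof -
  define glue :: "('a \<Rightarrow> 'b) \<times> ('a \<Rightarrow> 'b) \<Rightarrow> 'a \<Rightarrow> 'b"
    where "glue = (\<lambda>(f, g) x. if x \<in> W1 then f x else g x)"
  have "Pi_pmf A d P = Pi_pmf (W1 \<union> (A - W1)) d P"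
    using assms(2) by (simp add: Un_absorb1)
  also have "\<dots> = map_pmf glue (pair_pmf (Pi_pmf W1 d P) (Pi_pmf (A - W1) d P))"
    unfolding glue_def using assms(1,2) by (intro Pi_pmf_union) (auto intro: finite_subset)
  finally have split: "Pi_pmf A d P = map_pmf glue (pair_pmf (Pi_pmf W1 d P) (Pi_pmf (A - W1) d P))" .
  have "glue (f, g) \<in> E1 \<longleftrightarrow> f \<in> E1" for f g
    by (rule determined_byD[OF assms(4)]) (simp add: glue_def)
  moreover have "glue (f, g) \<in> E2 \<longleftrightarrow> g \<in> E2" for f g
    by (rule determined_byD[OF assms(5)]) (use assms(3) in \<open>auto simp: glue_def\<close>)
  ultimately have "glue -` E1 = E1 \<times> UNIV" "glue -` E2 = UNIV \<times> E2" "glue -` (E1 \<inter> E2) = E1 \<times> E2"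
    by auto
  then show ?thesis
    unfolding split measure_map_pmf by (simp add: measure_pmf_prob_pair_Times)
qed

lemma prob_random_coloring_pattern:
  assumes "inj_on g K" and "g ` K \<subseteq> {..<n}" and "finite K"
  shows "measure_pmf.prob (random_coloring p n) {c. \<forall>k\<in>K. c (g k) = f k} =
         (\<Prod>k\<in>K. pmf (bernoulli_pmf p) (f k))"
proof -
  define B where "B j = (if j \<in> g ` K then {f (the_inv_into K g j)} else UNIV)" for j
  have "{c. \<forall>k\<in>K. c (g k) = f k} = Pi {..<n} B"
    using assms(1,2) by (auto simp: B_def Pi_def the_inv_into_f_f)
  then have "measure_pmf.prob (random_coloring p n) {c. \<forall>k\<in>K. c (g k) = f k} =
      (\<Prod>j<n. measure_pmf.prob (bernoulli_pmf p) (B j))"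
    unfolding random_coloring_def by (simp add: measure_Pi_pmf_Pi)
  also have "\<dots> = (\<Prod>j\<in>g ` K. measure_pmf.prob (bernoulli_pmf p) (B j))"
    using assms(2) by (intro prod.mono_neutral_right) (auto simp: B_def)
  also have "\<dots> = (\<Prod>k\<in>K. measure_pmf.prob (bernoulli_pmf p) (B (g k)))"
    using assms(1) by (simp add: prod.reindex)
  also have "\<dots> = (\<Prod>k\<in>K. pmf (bernoulli_pmf p) (f k))"
    using assms(1) by (intro prod.cong) (auto simp: B_def the_inv_into_f_f measure_pmf_single)
  finally show ?thesis .
qed

lemma prod_alternating_pattern:
  fixes f :: "bool \<Rightarrow> 'a :: comm_monoid_mult"
  shows "(\<Prod>k\<le>2 * l. f (e \<noteq> odd k)) = f e ^ Suc l * f (\<not> e) ^ l"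
proof (induction l)
  case 0
  then show ?case by simp
next
  case (Suc l)
  have "2 * Suc l = Suc (Suc (2 * l))"
    by simp
  then show ?case
    using Suc by (simp add: ac_simps)
qed

lemma prob_alternating_with_end:
  assumes "2 * l < n"
  shows "measure_pmf.prob (random_coloring p n)
           {c. alternating (cycle_lift n c) z l \<and> cycle_lift n c (z + int l) = e} =
         pmf (bernoulli_pmf p) e ^ Suc l * pmf (bernoulli_pmf p) (\<not> e) ^ l"
proof -
  define g where "g k = cycle_node n (z - int l + int k)" for k
  have "inj_on (cycle_node n) {z - int l..z + int l}"
    using assms by (intro inj_on_cycle_node) simp
  then have "inj_on g {..2 * l}"
    unfolding g_def by (intro inj_onI) (auto dest: inj_onD)
  moreover have "g ` {..2 * l} \<subseteq> {..<n}"
    using assms cycle_node_less unfolding g_def by auto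
  moreover have "{c. alternating (cycle_lift n c) z l \<and> cycle_lift n c (z + int l) = e} =
      {c. \<forall>k\<in>{..2 * l}. c (g k) = (e \<noteq> odd k)}"
    unfolding alternating_with_end_iff g_def by (auto simp: cycle_lift_def)
  ultimately show ?thesis
    using prob_random_coloring_pattern[of g "{..2 * l}" n p "\<lambda>k. e \<noteq> odd k"]
      prod_alternating_pattern[of "pmf (bernoulli_pmf p)" e l]
    by simp
qed

lemma prob_alternating:
  assumes "0 \<le> p" and "p \<le> 1" and "2 * l < n"
  shows "measure_pmf.prob (random_coloring p n) {c. alternating (cycle_lift n c) z l} = (p * (1 - p)) ^ l"
proof -
  let ?A = "\<lambda>e. {c. alternating (cycle_lift n c) z l \<and> cycle_lift n c (z + int l) = e}"
  have "{c. alternating (cycle_lift n c) z l} = ?A True \<union> ?A False"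
    by auto
  then have "measure_pmf.prob (random_coloring p n) {c. alternating (cycle_lift n c) z l} =
      measure_pmf.prob (random_coloring p n) (?A True) + measure_pmf.prob (random_coloring p n) (?A False)"
    by (simp add: measure_pmf.finite_measure_Union disjoint_iff)
  also have "\<dots> = p ^ Suc l * (1 - p) ^ l + (1 - p) ^ Suc l * p ^ l"
    using assms prob_alternating_with_end[of l n p z True] prob_alternating_with_end[of l n p z False]
    by simp
  also have "\<dots> = (p * (1 - p)) ^ l"
    by (simp add: power_mult_distrib) (simp add: algebra_simps)
  finally show ?thesis .
qed

(* In round t+1 a node turns blue iff its window of radius t+1 alternates with blue ends, and
   white iff it alternates with white ends: probabilities p^(t+2) (1-p)^(t+1) and
   p^(t+1) (1-p)^(t+2), whose difference is the increment (2p-1) (p(1-p))^(t+1). *)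
definition blue_prob :: "real \<Rightarrow> nat \<Rightarrow> real" where
  "blue_prob p t = p + (2 * p - 1) * (\<Sum>k<t. (p * (1 - p)) ^ Suc k)"

definition blue_after :: "nat \<Rightarrow> nat \<Rightarrow> int \<Rightarrow> (nat \<Rightarrow> bool) set" where
  "blue_after n t z = {c. (mm_step_int ^^ t) (cycle_lift n c) z}"

lemma prob_blue_after:
  assumes "0 \<le> p" and "p \<le> 1" and "2 * t < n"
  shows "measure_pmf.prob (random_coloring p n) (blue_after n t z) = blue_prob p t"
  using assms(3)
proof (induction t)
  case 0
  then show ?case
    using assms prob_alternating_with_end[of 0 n p z True] by (simp add: blue_after_def blue_prob_def)
next
  case (Suc t)
  let ?P = "measure_pmf.prob (random_coloring p n)"
  let ?A = "{c. alternating (cycle_lift n c) z (Suc t)}"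
  let ?E = "\<lambda>e. {c. alternating (cycle_lift n c) z (Suc t) \<and> cycle_lift n c (z + int (Suc t)) = e}"
  have "blue_after n (Suc t) z = (blue_after n t z - ?A) \<union> ?E True"
    by (auto simp: blue_after_def mm_step_int_iterate_Suc simp del: funpow.simps)
  then have "?P (blue_after n (Suc t) z) = ?P (blue_after n t z - ?A) + ?P (?E True)"
    by (simp add: measure_pmf.finite_measure_Union disjoint_iff)
  also have "?P (blue_after n t z - ?A) = ?P (blue_after n t z) - ?P (blue_after n t z \<inter> ?A)"
    by (rule measure_pmf.finite_measure_Diff') simp_all
  also have "blue_after n t z \<inter> ?A = ?E False"
    using mm_step_int_iterate_before_flip by (auto simp: blue_after_def)
  finally have "?P (blue_after n (Suc t) z) = blue_prob p t - ?P (?E False) + ?P (?E True)"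
    using Suc by simp
  also have "\<dots> = blue_prob p t + (p ^ Suc (Suc t) * (1 - p) ^ Suc t - (1 - p) ^ Suc (Suc t) * p ^ Suc t)"
    using assms Suc.prems prob_alternating_with_end[of "Suc t" n p z True]
      prob_alternating_with_end[of "Suc t" n p z False]
    by simp
  also have "\<dots> = blue_prob p t + (2 * p - 1) * (p * (1 - p)) ^ Suc t"
    by (simp add: power_mult_distrib) (simp add: algebra_simps)
  also have "\<dots> = blue_prob p (Suc t)"
    by (simp add: blue_prob_def algebra_simps)
  finally show ?case .
qed

lemma mult_one_minus_self_le: "x * (1 - x) \<le> (1 / 4 :: real)"
proof -
  have "0 \<le> (x - 1 / 2) ^ 2"
    by simp
  then show ?thesis
    by (simp add: power2_eq_square algebra_simps)
qed

lemma blue_prob_tendsto: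
  assumes "0 \<le> p" and "p \<le> 1"
  shows "blue_prob p \<longlonglongrightarrow> (2 * p^2 - p^3) / (1 - p + p^2)"
proof -
  define q where "q = p * (1 - p)"
  have q: "0 \<le> q" "q < 1"
    using assms mult_one_minus_self_le[of p] unfolding q_def by auto
  then have "(\<lambda>k. q * q ^ k) sums (q * (1 / (1 - q)))"
    by (intro sums_mult geometric_sums) simp
  then have "(\<lambda>t. p + (2 * p - 1) * (\<Sum>k<t. q ^ Suc k)) \<longlonglongrightarrow> p + (2 * p - 1) * (q / (1 - q))"
    unfolding sums_def by (intro tendsto_intros) simp
  moreover have "p + (2 * p - 1) * (q / (1 - q)) = (2 * p^2 - p^3) / (1 - p + p^2)"
    using q unfolding q_def by (simp add: field_simps power2_eq_square power3_eq_cube)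
  ultimately show ?thesis
    unfolding blue_prob_def q_def by simp
qed

section \<open>Stabilisation and concentration\<close>

lemma variance_sum_indicator:
  fixes M :: "'a pmf" and A :: "'i \<Rightarrow> 'a set"
  assumes "finite (set_pmf M)" and "finite I"
  shows "measure_pmf.variance M (\<lambda>x. \<Sum>i\<in>I. indicator (A i) x) =
         (\<Sum>i\<in>I. \<Sum>j\<in>I. measure_pmf.prob M (A i \<inter> A j) - measure_pmf.prob M (A i) * measure_pmf.prob M (A j))"
proof -
  have integrable: "integrable M f" for f :: "'a \<Rightarrow> real"
    using assms(1) by (rule integrable_measure_pmf_finite)
  have "(\<Sum>i\<in>I. indicator (A i) x)\<^sup>2 = (\<Sum>i\<in>I. \<Sum>j\<in>I. indicator (A i \<inter> A j) x :: real)" for x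
    unfolding power2_eq_square sum_product by (simp add: indicator_inter_arith)
  then have "measure_pmf.expectation M (\<lambda>x. (\<Sum>i\<in>I. indicator (A i) x)\<^sup>2) =
      (\<Sum>i\<in>I. \<Sum>j\<in>I. measure_pmf.prob M (A i \<inter> A j))"
    by (simp add: integrable)
  moreover have "(measure_pmf.expectation M (\<lambda>x. \<Sum>i\<in>I. indicator (A i) x))\<^sup>2 =
      (\<Sum>i\<in>I. \<Sum>j\<in>I. measure_pmf.prob M (A i) * measure_pmf.prob M (A j))"
    by (simp add: integrable power2_eq_square sum_product)
  ultimately show ?thesis
    by (subst measure_pmf.variance_eq) (simp_all add: integrable sum_subtractf)
qed

lemma finite_set_pmf_random_coloring: "finite (set_pmf (random_coloring p n))"
proof (rule finite_subset)
  show "set_pmf (random_coloring p n) \<subseteq> PiE_dflt {..<n} False (set_pmf \<circ> (\<lambda>_. bernoulli_pmf p))"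
    unfolding random_coloring_def by (rule set_Pi_pmf_subset') simp
qed auto

lemma num_blue_iterate:
  assumes "3 \<le> n"
  shows "real (num_blue n ((mm_step n ^^ t) c)) = (\<Sum>i<n. indicator (blue_after n t (int i)) c)"
proof -
  have "{i. i < n \<and> (mm_step n ^^ t) c i} = {..<n} \<inter> {i. c \<in> blue_after n t (int i)}"
    using mm_step_iterate_eq_mm_step_int[OF assms] by (auto simp: blue_after_def)
  then show ?thesis
    unfolding num_blue_def by (simp add: indicator_def sum.If_cases)
qed

lemma expectation_num_blue:
  assumes "0 \<le> p" and "p \<le> 1" and "3 \<le> n" and "2 * t < n"
  shows "measure_pmf.expectation (random_coloring p n) (\<lambda>c. real (num_blue n ((mm_step n ^^ t) c))) =
         real n * blue_prob p t"
  using assms prob_blue_after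
  by (simp add: num_blue_iterate integrable_measure_pmf_finite[OF finite_set_pmf_random_coloring])

lemma determined_by_blue_after:
  "determined_by (blue_after n t z) (cycle_node n ` {z - int t..z + int t})"
  unfolding determined_by_def blue_after_def
proof (intro allI impI)
  fix c c'
  assume agree: "\<forall>j\<in>cycle_node n ` {z - int t..z + int t}. c j = c' j"
    and "c \<in> {c. (mm_step_int ^^ t) (cycle_lift n c) z}"
  moreover have "cycle_lift n c w = cycle_lift n c' w" if "\<bar>w - z\<bar> \<le> int t" for w
    using agree that by (auto simp: cycle_lift_def abs_le_iff)
  then have "(mm_step_int ^^ t) (cycle_lift n c) z = (mm_step_int ^^ t) (cycle_lift n c') z"
    by (intro mm_step_int_iterate_local) blast
  ultimately show "c' \<in> {c. (mm_step_int ^^ t) (cycle_lift n c) z}"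
    by simp
qed

lemma windows_overlap_imp_close:
  assumes "0 < n"
    and "cycle_node n ` {z - int t..z + int t} \<inter> cycle_node n ` {z' - int t..z' + int t} \<noteq> {}"
  shows "cycle_node n z' \<in> cycle_node n ` {z - 2 * int t..z + 2 * int t}"
proof -
  obtain w w' where w: "w \<in> {z - int t..z + int t}" "w' \<in> {z' - int t..z' + int t}"
    and eq: "cycle_node n w = cycle_node n w'"
    using assms(2) by blast
  then obtain k where "w - w' = int n * k"
    using assms(1) by (auto simp: cycle_node_eq_iff mod_eq_dvd_iff elim!: dvdE)
  then have "cycle_node n z' = cycle_node n (z' + (w - w'))"
    using assms(1) by (simp add: cycle_node_eq_iff)
  moreover have "z' + (w - w') \<in> {z - 2 * int t..z + 2 * int t}"
    using w by auto
  ultimately show ?thesis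
    by blast
qed

lemma covariance_blue_after_le:
  assumes "j < n"
  shows "measure_pmf.prob (random_coloring p n) (blue_after n t z \<inter> blue_after n t (int j)) -
         measure_pmf.prob (random_coloring p n) (blue_after n t z) *
         measure_pmf.prob (random_coloring p n) (blue_after n t (int j))
       \<le> indicator (cycle_node n ` {z - 2 * int t..z + 2 * int t}) j"
proof (cases "j \<in> cycle_node n ` {z - 2 * int t..z + 2 * int t}")
  case True
  have "measure_pmf.prob (random_coloring p n) (blue_after n t z \<inter> blue_after n t (int j)) \<le> 1"
    by simp
  then show ?thesis
    using True by (simp add: diff_le_eq order_trans[OF _ le_add_same_cancel1[THEN iffD2]])
next
  case False
  then have disjoint: "cycle_node n ` {z - int t..z + int t} \<inter> cycle_node n ` {int j - int t..int j + int t} = {}"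
    using windows_overlap_imp_close[of n z t "int j"] assms by auto
  have "measure_pmf.prob (random_coloring p n) (blue_after n t z \<inter> blue_after n t (int j)) =
      measure_pmf.prob (random_coloring p n) (blue_after n t z) *
      measure_pmf.prob (random_coloring p n) (blue_after n t (int j))"
    unfolding random_coloring_def
    by (rule prob_Pi_pmf_Int_determined_by[OF _ _ disjoint determined_by_blue_after determined_by_blue_after])
      (use assms cycle_node_less in auto)
  then show ?thesis
    using False by simp
qed

lemma variance_num_blue:
  assumes "3 \<le> n"
  shows "measure_pmf.variance (random_coloring p n) (\<lambda>c. real (num_blue n ((mm_step n ^^ t) c))) \<le>
         real n * (4 * t + 1)"
proof -
  let ?P = "measure_pmf.prob (random_coloring p n)"
  let ?B = "\<lambda>i. blue_after n t (int i)"
  let ?near = "\<lambda>i. cycle_node n ` {int i - 2 * int t..int i + 2 * int t}"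
  have "measure_pmf.variance (random_coloring p n) (\<lambda>c. real (num_blue n ((mm_step n ^^ t) c))) =
      (\<Sum>i<n. \<Sum>j<n. ?P (?B i \<inter> ?B j) - ?P (?B i) * ?P (?B j))"
    unfolding num_blue_iterate[OF assms] by (rule variance_sum_indicator[OF finite_set_pmf_random_coloring]) simp
  also have "\<dots> \<le> (\<Sum>i<n. \<Sum>j<n. indicator (?near i) j)"
    by (intro sum_mono covariance_blue_after_le) simp
  also have "\<dots> \<le> (\<Sum>i<n. real (4 * t + 1))"
  proof (intro sum_mono)
    fix i
    have "(\<Sum>j<n. indicator (?near i) j :: real) = real (card ({..<n} \<inter> ?near i))"
      by (simp add: indicator_def sum.If_cases)
    also have "card ({..<n} \<inter> ?near i) \<le> card {int i - 2 * int t..int i + 2 * int t}"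
      by (rule order_trans[OF card_mono card_image_le]) auto
    finally show "(\<Sum>j<n. indicator (?near i) j) \<le> real (4 * t + 1)"
      by simp
  qed
  finally show ?thesis
    by simp
qed

lemma prob_num_blue_deviation:
  assumes "0 \<le> p" and "p \<le> 1" and "3 \<le> n" and "2 * t < n" and "0 < a"
  shows "measure_pmf.prob (random_coloring p n)
           {c. a \<le> \<bar>real (num_blue n ((mm_step n ^^ t) c)) - real n * blue_prob p t\<bar>}
         \<le> real n * (4 * t + 1) / a\<^sup>2"
proof -
  let ?M = "random_coloring p n"
  let ?X = "\<lambda>c. real (num_blue n ((mm_step n ^^ t) c))"
  have "measure_pmf.prob ?M {c \<in> space (measure_pmf ?M). a \<le> \<bar>?X c - measure_pmf.expectation ?M ?X\<bar>}
      \<le> measure_pmf.variance ?M ?X / a\<^sup>2"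
    by (rule measure_pmf.Chebyshev_inequality)
      (simp_all add: assms(5) integrable_measure_pmf_finite[OF finite_set_pmf_random_coloring])
  also have "\<dots> \<le> real n * (4 * t + 1) / a\<^sup>2"
    by (intro divide_right_mono variance_num_blue assms(3)) simp
  finally show ?thesis
    using expectation_num_blue[OF assms(1-4)] by simp
qed

lemma prob_not_stable:
  assumes "0 \<le> p" and "p \<le> 1" and "3 \<le> n" and "2 * Suc t < n"
  shows "measure_pmf.prob (random_coloring p n) {c. \<not> mm_stable n ((mm_step n ^^ t) c)}
         \<le> real n * (p * (1 - p)) ^ Suc t"
proof -
  let ?P = "measure_pmf.prob (random_coloring p n)"
  let ?A = "\<lambda>i. {c. alternating (cycle_lift n c) (int i) (Suc t)}"
  have "{c. \<not> mm_stable n ((mm_step n ^^ t) c)} \<subseteq> (\<Union>i<n. ?A i)"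
    using mm_stable_iterate_if_not_alternating[OF assms(3)] by blast
  then have "?P {c. \<not> mm_stable n ((mm_step n ^^ t) c)} \<le> ?P (\<Union>i<n. ?A i)"
    by (rule measure_pmf.finite_measure_mono) simp
  also have "\<dots> \<le> (\<Sum>i<n. ?P (?A i))"
    by (rule measure_pmf.finite_measure_subadditive_finite) simp_all
  also have "\<dots> = real n * (p * (1 - p)) ^ Suc t"
    using assms by (simp add: prob_alternating)
  finally show ?thesis .
qed

lemma prob_stable_and_concentrated:
  assumes "0 \<le> p" and "p \<le> 1" and "3 \<le> n" and "2 * Suc t < n" and "0 < a"
  shows "1 - real n * (p * (1 - p)) ^ Suc t - real n * (4 * t + 1) / a\<^sup>2 \<le>
         measure_pmf.prob (random_coloring p n)
           {c. mm_stable n ((mm_step n ^^ t) c) \<and>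
               \<bar>real (num_blue n ((mm_step n ^^ t) c)) - real n * blue_prob p t\<bar> < a}"
proof -
  let ?P = "measure_pmf.prob (random_coloring p n)"
  let ?U = "{c. \<not> mm_stable n ((mm_step n ^^ t) c)}"
  let ?D = "{c. a \<le> \<bar>real (num_blue n ((mm_step n ^^ t) c)) - real n * blue_prob p t\<bar>}"
  have "{c. mm_stable n ((mm_step n ^^ t) c) \<and>
            \<bar>real (num_blue n ((mm_step n ^^ t) c)) - real n * blue_prob p t\<bar> < a} = UNIV - (?U \<union> ?D)"
    by auto
  then have "?P {c. mm_stable n ((mm_step n ^^ t) c) \<and>
                 \<bar>real (num_blue n ((mm_step n ^^ t) c)) - real n * blue_prob p t\<bar> < a} = 1 - ?P (?U \<union> ?D)"
    using measure_pmf.prob_compl[of "?U \<union> ?D"] by simp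
  moreover have "?P (?U \<union> ?D) \<le> ?P ?U + ?P ?D"
    by (rule measure_Un_le) simp_all
  moreover have "2 * t < n"
    using assms(4) by simp
  ultimately show ?thesis
    using prob_not_stable[OF assms(1-4)] prob_num_blue_deviation[OF assms(1-3) \<open>2 * t < n\<close> assms(5)]
    by linarith
qed

(* Chosen so that n (p(1-p))^(rounds n + 1) <= n e^-(2 ln n) = 1/n. *)
definition rounds :: "nat \<Rightarrow> nat" where
  "rounds n = nat \<lfloor>2 * ln (real n)\<rfloor>"

lemma rounds_le: "real (rounds n) \<le> 2 * ln (real n)"
proof (cases "n = 0")
  case True
  then show ?thesis by (simp add: rounds_def)
next
  case False
  then have "0 \<le> ln (real n)"
    by simp
  then show ?thesis
    unfolding rounds_def by linarith
qed

lemma filterlim_rounds: "filterlim rounds at_top sequentially"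
proof -
  have "filterlim (\<lambda>n::nat. 2 * ln (real n)) at_top sequentially"
    by real_asymp
  then have "filterlim (\<lambda>n::nat. \<lfloor>2 * ln (real n)\<rfloor>) at_top sequentially"
    by (rule filterlim_compose[OF filterlim_floor_sequentially])
  then show ?thesis
    unfolding rounds_def by (rule filterlim_compose[OF filterlim_nat_sequentially])
qed

lemma power_Suc_rounds_le:
  assumes "0 \<le> q" and "q \<le> 1 / 4" and "0 < n"
  shows "q ^ Suc (rounds n) \<le> 1 / (real n)\<^sup>2"
proof -
  have "exp 1 \<le> (4 :: real)"
    using exp_le by simp
  then have "q * exp 1 \<le> 1"
    using mult_left_mono[of "exp 1" 4 q] assms(1,2) by linarith
  then have "q \<le> exp (- 1)"
    by (simp add: exp_minus field_simps)
  then have "q ^ Suc (rounds n) \<le> exp (- 1) ^ Suc (rounds n)"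
    using assms(1) by (rule power_mono)
  also have "\<dots> = exp (- real (Suc (rounds n)))"
    using exp_of_nat_mult[of "Suc (rounds n)" "- 1 :: real"] by simp
  also have "\<dots> \<le> exp (- (2 * ln (real n)))"
    unfolding rounds_def by simp linarith
  also have "exp (real 2 * ln (real n)) = exp (ln (real n)) ^ 2"
    by (rule exp_of_nat_mult)
  then have "exp (- (2 * ln (real n))) = 1 / (real n)\<^sup>2"
    using assms(3) by (simp add: exp_minus inverse_eq_divide)
  finally show ?thesis .
qed

lemma prob_stable_and_concentrated_rounds:
  assumes "0 \<le> p" and "p \<le> 1" and "0 < \<delta>" and "3 \<le> n" and "4 * ln (real n) + 3 < real n"
  shows "1 - 1 / real n - (8 * ln (real n) + 1) / (\<delta>\<^sup>2 * real n) \<le>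
         measure_pmf.prob (random_coloring p n)
           {c. mm_stable n ((mm_step n ^^ rounds n) c) \<and>
               \<bar>real (num_blue n ((mm_step n ^^ rounds n) c)) - real n * blue_prob p (rounds n)\<bar>
                 < \<delta> * real n}"
proof -
  let ?T = "rounds n"
  have n: "0 < real n"
    using assms(4) by simp
  have "real (2 * Suc ?T) < real n"
    using rounds_le[of n] assms(5) by auto
  then have "2 * Suc ?T < n"
    by (simp only: of_nat_less_iff)
  then have "1 - real n * (p * (1 - p)) ^ Suc ?T - real n * (4 * ?T + 1) / (\<delta> * real n)\<^sup>2 \<le>
      measure_pmf.prob (random_coloring p n)
        {c. mm_stable n ((mm_step n ^^ ?T) c) \<and>
            \<bar>real (num_blue n ((mm_step n ^^ ?T) c)) - real n * blue_prob p ?T\<bar> < \<delta> * real n}"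
    using assms n by (intro prob_stable_and_concentrated) simp_all
  moreover have "real n * (p * (1 - p)) ^ Suc ?T \<le> real n * (1 / (real n)\<^sup>2)"
    using assms n mult_one_minus_self_le[of p]
    by (intro mult_left_mono power_Suc_rounds_le) simp_all
  moreover have "real n * (4 * ?T + 1) / (\<delta> * real n)\<^sup>2 = (4 * ?T + 1) / (\<delta>\<^sup>2 * real n)"
    using n by (simp add: power2_eq_square)
  moreover have "(4 * ?T + 1) / (\<delta>\<^sup>2 * real n) \<le> (8 * ln (real n) + 1) / (\<delta>\<^sup>2 * real n)"
    using rounds_le[of n] assms(3) n by (intro divide_right_mono) simp_all
  ultimately show ?thesis
    using n by (simp add: power2_eq_square)
qed

lemma prob_stable_and_concentrated_tendsto:
  assumes "0 \<le> p" and "p \<le> 1" and "0 < \<delta>"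
  shows "(\<lambda>n. measure_pmf.prob (random_coloring p n)
            {c. mm_stable n ((mm_step n ^^ rounds n) c) \<and>
                \<bar>real (num_blue n ((mm_step n ^^ rounds n) c)) - real n * blue_prob p (rounds n)\<bar>
                  < \<delta> * real n}) \<longlonglongrightarrow> 1"
    (is "?f \<longlonglongrightarrow> 1")
proof (rule tendsto_sandwich[OF _ _ _ tendsto_const])
  show "(\<lambda>n. 1 - 1 / real n - (8 * ln (real n) + 1) / (\<delta>\<^sup>2 * real n)) \<longlonglongrightarrow> 1"
    using assms(3) by real_asymp
  have "eventually (\<lambda>n. 3 \<le> n) sequentially"
    by (rule eventually_ge_at_top)
  moreover have "eventually (\<lambda>n::nat. 4 * ln (real n) + 3 < real n) sequentially"
    by real_asymp
  ultimately show "eventually (\<lambda>n. 1 - 1 / real n - (8 * ln (real n) + 1) / (\<delta>\<^sup>2 * real n) \<le> ?f n)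
      sequentially"
    by eventually_elim (rule prob_stable_and_concentrated_rounds[OF assms])
  show "eventually (\<lambda>n. ?f n \<le> 1) sequentially"
    by simp
qed

lemma blue_density_pos:
  fixes p :: real
  assumes "0 < p" and "p \<le> 1"
  shows "0 < (2 * p^2 - p^3) / (1 - p + p^2)"
proof -
  have "0 < 1 - p + p^2"
    using mult_one_minus_self_le[of p] by (simp add: power2_eq_square algebra_simps)
  moreover have "2 * p^2 - p^3 = p^2 * (2 - p)"
    by (simp add: power2_eq_square power3_eq_cube algebra_simps)
  ultimately show ?thesis
    using assms by simp
qed

lemma bounds_of_deviations:
  fixes x m b \<mu> \<delta> :: real
  assumes "\<bar>x - m * b\<bar> < \<delta> * m" and "\<bar>b - \<mu>\<bar> < \<delta>" and "0 \<le> m"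
  shows "(\<mu> - 2 * \<delta>) * m \<le> x" and "x \<le> (\<mu> + 2 * \<delta>) * m"
proof -
  have "\<bar>m * b - m * \<mu>\<bar> = m * \<bar>b - \<mu>\<bar>"
    using assms(3) by (simp add: abs_mult flip: right_diff_distrib)
  moreover have "m * \<bar>b - \<mu>\<bar> \<le> m * \<delta>"
    using assms(2,3) by (intro mult_left_mono) simp_all
  moreover have "\<bar>x - m * \<mu>\<bar> \<le> \<bar>x - m * b\<bar> + \<bar>m * b - m * \<mu>\<bar>"
    using abs_triangle_ineq[of "x - m * b" "m * b - m * \<mu>"] by simp
  ultimately have "\<bar>x - m * \<mu>\<bar> < 2 * \<delta> * m"
    using assms(1) by (simp add: algebra_simps)
  then show "(\<mu> - 2 * \<delta>) * m \<le> x" and "x \<le> (\<mu> + 2 * \<delta>) * m"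
    by (simp_all add: abs_less_iff algebra_simps)
qed

theorem theorem4p1:
  fixes p \<epsilon> :: real
  assumes "1/2 \<le> p" and "p \<le> 1" and "\<epsilon> > 0"
  shows "\<exists>C>0. (\<lambda>n. measure_pmf.prob (random_coloring p n)
            {c. \<exists>t::nat. real t \<le> C * ln (real n)
                 \<and> mm_stable n ((mm_step n ^^ t) c)
                 \<and> (1 - \<epsilon>) * ((2*p^2 - p^3) / (1 - p + p^2)) * real n \<le> real (num_blue n ((mm_step n ^^ t) c))
                 \<and> real (num_blue n ((mm_step n ^^ t) c)) \<le> (1 + \<epsilon>) * ((2*p^2 - p^3) / (1 - p + p^2)) * real n})
          \<longlonglongrightarrow> 1"
proof -
  define \<mu> where "\<mu> = (2*p^2 - p^3) / (1 - p + p^2)"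
  define \<delta> where "\<delta> = \<epsilon> * \<mu> / 2"
  define good where "good n = {c. mm_stable n ((mm_step n ^^ rounds n) c) \<and>
      \<bar>real (num_blue n ((mm_step n ^^ rounds n) c)) - real n * blue_prob p (rounds n)\<bar> < \<delta> * real n}" for n
  define target where "target n = {c. \<exists>t::nat. real t \<le> 2 * ln (real n)
      \<and> mm_stable n ((mm_step n ^^ t) c)
      \<and> (1 - \<epsilon>) * \<mu> * real n \<le> real (num_blue n ((mm_step n ^^ t) c))
      \<and> real (num_blue n ((mm_step n ^^ t) c)) \<le> (1 + \<epsilon>) * \<mu> * real n}" for n
  have p: "0 \<le> p" "p \<le> 1"
    using assms by auto
  \<comment> \<open>The hypothesis \<open>1/2 \<le> p\<close> is only needed for \<open>0 < p\<close>, which makes the limit density positive.\<close>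
  have "0 < \<mu>"
    using blue_density_pos[of p] assms unfolding \<mu>_def by simp
  then have "0 < \<delta>"
    using assms(3) unfolding \<delta>_def by simp
  have "eventually (\<lambda>n. \<bar>blue_prob p (rounds n) - \<mu>\<bar> < \<delta>) sequentially"
    using tendstoD[OF filterlim_compose[OF blue_prob_tendsto[OF p] filterlim_rounds] \<open>0 < \<delta>\<close>]
    by (simp add: \<mu>_def dist_real_def)
  then have "eventually (\<lambda>n. good n \<subseteq> target n) sequentially"
  proof eventually_elim
    case (elim n)
    have "\<mu> - 2 * \<delta> = (1 - \<epsilon>) * \<mu>" and "\<mu> + 2 * \<delta> = (1 + \<epsilon>) * \<mu>"
      by (simp_all add: \<delta>_def algebra_simps)
    then show "good n \<subseteq> target n"
      using bounds_of_deviations[OF _ elim] rounds_le[of n]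
      unfolding good_def target_def by fastforce
  qed
  then have "eventually (\<lambda>n. measure_pmf.prob (random_coloring p n) (good n) \<le>
      measure_pmf.prob (random_coloring p n) (target n)) sequentially"
    by eventually_elim (rule measure_pmf.finite_measure_mono, simp_all)
  then have "(\<lambda>n. measure_pmf.prob (random_coloring p n) (target n)) \<longlonglongrightarrow> 1"
    by (rule tendsto_sandwich[OF _ _ prob_stable_and_concentrated_tendsto[OF p \<open>0 < \<delta>\<close>, folded good_def]
          tendsto_const]) simp
  then show ?thesis
    unfolding target_def \<mu>_def by (intro exI[of _ 2]) simp
qed

end
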